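(* Let $G$ be a graph with $n$ vertices and let $H$ be a blowup of $G$ with $m$ vertices. If $\sigma'$ is a multiset of $m-n$ real numbers and $A\in\mathcal{S}(G)$ is a matrix none of whose diagonal entries belongs to $\sigma'$, then there is a matrix $A'\in\mathcal{S}(H)$ with spectrum $\operatorname{spec}(A)\cup\sigma'$ (union of multisets).
   Context: For a simple graph $G$ on $n$ vertices, $\mathcal{S}(G)$ is the set of all $n\times n$ real symmetric matrices $A=(a_{ij})$ such that for $i\neq j$, $a_{ij}\neq 0$ if and only if $\{i,j\}$ is an edge of $G$ (diagonal entries unrestricted). For a vertex $v$ of a graph and a positive integer $k$, the $k$-duplication of $v$ replaces $v$ by $k$ mutually adjacent vertices, each adjacent to exactly the neighbours of $v$ in $G-v$ (so the resulting graph has $|G|+k-1$ vertices; $1$-duplication does nothing). If $V(G)=\{v_1,\ldots,v_n\}$ and $m_1,\ldots,m_n$ are positive integers, the (closed) blowup of $G$ with respect to $m_1,\ldots,m_n$ is the graph obtained from $G$ by performing the $m_i$-duplication of $v_i$ for $i=1,\ldots,n$ sequentially; it has $\sum_i m_i$ vertices. *)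

theory Defs
  imports "Jordan_Normal_Form.Char_Poly" "HOL-Computational_Algebra.Polynomial"
begin

definition simple_graph :: "nat \<Rightarrow> (nat \<Rightarrow> nat \<Rightarrow> bool) \<Rightarrow> bool" where
  "simple_graph n E \<longleftrightarrow> (\<forall>i j. E i j \<longrightarrow> E j i \<and> i \<noteq> j \<and> i < n \<and> j < n)"

definition in_S :: "nat \<Rightarrow> (nat \<Rightarrow> nat \<Rightarrow> bool) \<Rightarrow> real mat \<Rightarrow> bool" where
  "in_S n E A \<longleftrightarrow> A \<in> carrier_mat n n \<and> transpose_mat A = A \<and>
     (\<forall>i<n. \<forall>j<n. i \<noteq> j \<longrightarrow> (A $$ (i, j) \<noteq> 0 \<longleftrightarrow> E i j))"

text \<open>H (on {0..<m}) is a (closed) blowup of G (on {0..<n}), up to relabelling: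
  there is a surjection f onto the vertices of G whose fibres are the cliques of
  duplicated vertices; distinct u, v are adjacent iff they come from the same vertex
  or from adjacent vertices of G.\<close>
definition is_blowup :: "nat \<Rightarrow> (nat \<Rightarrow> nat \<Rightarrow> bool) \<Rightarrow> nat \<Rightarrow> (nat \<Rightarrow> nat \<Rightarrow> bool) \<Rightarrow> bool" where
  "is_blowup n E m F \<longleftrightarrow> (\<exists>f. f ` {0..<m} = {0..<n} \<and>
     (\<forall>u v. F u v \<longleftrightarrow> (u < m \<and> v < m \<and> u \<noteq> v \<and> (f u = f v \<or> E (f u) (f v)))))"

definition spec :: "real mat \<Rightarrow> real multiset" where
  "spec A = proots (char_poly A)"

end

theory Submission
  imports Defs
begin

text \<open>Duplicate one vertex at a time. Given \<open>A \<in> S(G)\<close>, a vertex \<open>v\<close> and \<open>l \<noteq> A\<^sub>v\<^sub>v\<close>,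
  conjugate \<open>A \<oplus> (l)\<close> by the reflection \<open>[[c, s], [s, -c]]\<close> in the coordinates of \<open>v\<close> and
  of the new vertex, where \<open>c, s \<noteq> 0\<close> and \<open>c\<^sup>2 + s\<^sup>2 = 1\<close>. The result is symmetric with
  spectrum \<open>spec A + {l}\<close>; the two copies of \<open>v\<close> carry the row of \<open>v\<close> scaled by \<open>c\<close> and
  by \<open>s\<close>, and the entry between them is \<open>c s (A\<^sub>v\<^sub>v - l) \<noteq> 0\<close>, so the pattern is \<open>G\<close> with
  \<open>v\<close> duplicated. The two new diagonal entries are \<open>t A\<^sub>v\<^sub>v + (1 - t) l\<close> and
  \<open>(1 - t) A\<^sub>v\<^sub>v + t l\<close> with \<open>t = c\<^sup>2\<close>, so \<open>t\<close> can be chosen to keep them off the finitely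
  many eigenvalues still to be added, which preserves the hypothesis on the diagonal for the
  next step. After \<open>m - n\<close> duplications the blowup is reached up to a relabelling of the
  vertices, which is a permutation similarity.\<close>

definition blowup_graph ::
    "nat \<Rightarrow> (nat \<Rightarrow> nat) \<Rightarrow> (nat \<Rightarrow> nat \<Rightarrow> bool) \<Rightarrow> nat \<Rightarrow> nat \<Rightarrow> bool" where
  "blowup_graph m f E u w \<longleftrightarrow> u < m \<and> w < m \<and> u \<noteq> w \<and> (f u = f w \<or> E (f u) (f w))"

lemma is_blowup_iff_blowup_graph:
  "is_blowup n E m F \<longleftrightarrow> (\<exists>f. f ` {0..<m} = {0..<n} \<and> F = blowup_graph m f E)"
  unfolding is_blowup_def blowup_graph_def by (simp add: fun_eq_iff)

lemma is_blowup_le: "is_blowup n E m F \<Longrightarrow> n \<le> m"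
  unfolding is_blowup_def
  by (metis card_atLeastLessThan card_image_le finite_atLeastLessThan diff_zero)

lemma blowup_graph_factor:
  assumes "h ` {0..<m} \<subseteq> {0..<k}" and "\<forall>u<m. f u = g (h u)"
  shows "blowup_graph m f E = blowup_graph m h (blowup_graph k g E)"
  using assms unfolding blowup_graph_def by (fastforce simp: fun_eq_iff)

definition dup_map :: "nat \<Rightarrow> nat \<Rightarrow> nat \<Rightarrow> nat" where
  "dup_map n v z = (if z = n then v else z)"

lemma surj_factor_dup_map:
  fixes f :: "nat \<Rightarrow> nat"
  assumes surj: "f ` {0..<m} = {0..<n}" and "\<not> inj_on f {0..<m}"
  obtains v h where "v < n" "h ` {0..<m} = {0..<Suc n}" "\<forall>u<m. f u = dup_map n v (h u)"
proof -
  obtain u1 u2 where u: "u1 < m" "u2 < m" "u1 \<noteq> u2" "f u1 = f u2"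
    using assms(2) unfolding inj_on_def by auto
  have f_less: "f u < n" if "u < m" for u
    using surj that by auto
  \<comment> \<open>\<open>u\<^sub>1\<close> moves to the new vertex; \<open>u\<^sub>2\<close> still covers \<open>f u\<^sub>1\<close>\<close>
  define h where "h u = (if u = u1 then n else f u)" for u
  have "h ` {0..<m} = {0..<Suc n}"
  proof
    show "h ` {0..<m} \<subseteq> {0..<Suc n}" using f_less by (auto simp: h_def less_Suc_eq)
    show "{0..<Suc n} \<subseteq> h ` {0..<m}"
    proof
      fix y assume "y \<in> {0..<Suc n}"
      then consider "y = n" | u where "u < m" "y = f u" using surj by fastforce
      then show "y \<in> h ` {0..<m}"
      proof cases
        case 1
        then show ?thesis using u(1) by (auto simp: h_def)
      next
        case (2 u)
        then have "y = h (if u = u1 then u2 else u)" using u by (auto simp: h_def)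
        then show ?thesis using 2 u by auto
      qed
    qed
  qed
  moreover have "\<forall>u<m. f u = dup_map n (f u1) (h u)"
    using f_less u by (auto simp: h_def dup_map_def)
  moreover have "f u1 < n" using f_less u(1) .
  ultimately show ?thesis using that by blast
qed

lemma is_blowup_dup:
  assumes "is_blowup n E m F" and "n < m"
  shows "\<exists>v<n. is_blowup (Suc n) (blowup_graph (Suc n) (dup_map n v) E) m F"
proof -
  obtain f where f: "f ` {0..<m} = {0..<n}" "F = blowup_graph m f E"
    using assms(1) by (auto simp: is_blowup_iff_blowup_graph)
  have "\<not> inj_on f {0..<m}" using card_image[of f "{0..<m}"] f(1) assms(2) by auto
  then obtain v h where "v < n" "h ` {0..<m} = {0..<Suc n}" "\<forall>u<m. f u = dup_map n v (h u)"
    using surj_factor_dup_map[OF f(1)] by blast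
  then show ?thesis
    using blowup_graph_factor[of h m "Suc n" f "dup_map n v" E] f(2)
    by (auto simp: is_blowup_iff_blowup_graph)
qed

lemma similar_mat_orthogonal_conj:
  fixes P A :: "'a :: field mat"
  assumes P: "P \<in> carrier_mat n n" and A: "A \<in> carrier_mat n n"
    and orth: "P * transpose_mat P = 1\<^sub>m n"
  shows "similar_mat (P * A * transpose_mat P) A"
  using mat_mult_left_right_inverse[OF P _ orth] P A orth
  by (intro similar_matI[of _ _ P "transpose_mat P" n]) auto

lemma spec_orthogonal_conj:
  assumes "P \<in> carrier_mat n n" and "A \<in> carrier_mat n n" and "P * transpose_mat P = 1\<^sub>m n"
  shows "spec (P * A * transpose_mat P) = spec A"
  unfolding spec_def using char_poly_similar[OF similar_mat_orthogonal_conj[OF assms]] by simp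

lemma transpose_symmetric_conj:
  fixes P A :: "'a :: comm_semiring_0 mat"
  assumes P: "P \<in> carrier_mat m n" and A: "A \<in> carrier_mat n n" and sym: "transpose_mat A = A"
  shows "transpose_mat (P * A * transpose_mat P) = P * A * transpose_mat P"
proof -
  have "transpose_mat (P * A * transpose_mat P) = P * transpose_mat (P * A)"
    using transpose_mult[of "P * A" m n "transpose_mat P" m] P A by simp
  also have "\<dots> = P * (A * transpose_mat P)"
    using transpose_mult[of P m n A n] P A sym by simp
  also have "\<dots> = P * A * transpose_mat P"
    using P A by (simp add: assoc_mult_mat[of P m n A n _ m])
  finally show ?thesis .
qed

lemma symmetric_mat_index_swap:
  assumes "transpose_mat A = A" and "A \<in> carrier_mat n n" and "i < n" and "j < n"
  shows "A $$ (j, i) = A $$ (i, j)"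
  using assms by (metis carrier_matD index_transpose_mat(1))

definition perm_mat :: "nat \<Rightarrow> (nat \<Rightarrow> nat) \<Rightarrow> 'a :: semiring_1 mat" where
  "perm_mat n f = mat n n (\<lambda>(i, j). if f i = j then 1 else 0)"

lemma perm_mat_carrier [simp]: "perm_mat n f \<in> carrier_mat n n"
  by (simp add: perm_mat_def)

lemma index_perm_mat_mult:
  assumes "X \<in> carrier_mat n nc" "i < n" "j < nc" "f i < n"
  shows "(perm_mat n f * X) $$ (i, j) = X $$ (f i, j)"
  using assms
  by (simp add: perm_mat_def scalar_prod_def if_distrib[of "\<lambda>x. x * _"] sum.delta cong: if_cong)

lemma index_mult_transpose_perm_mat:
  assumes "X \<in> carrier_mat nr n" "i < nr" "j < n" "f j < n"
  shows "(X * transpose_mat (perm_mat n f)) $$ (i, j) = X $$ (i, f j)"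
  using assms
  by (simp add: perm_mat_def scalar_prod_def if_distrib[of "\<lambda>x. _ * x"] sum.delta cong: if_cong)

lemma perm_mat_orthogonal:
  assumes "f ` {0..<n} \<subseteq> {0..<n}" and "inj_on f {0..<n}"
  shows "perm_mat n f * transpose_mat (perm_mat n f) = (1\<^sub>m n :: 'a :: semiring_1 mat)"
proof (rule eq_matI)
  fix i j assume "i < dim_row (1\<^sub>m n :: 'a mat)" "j < dim_col (1\<^sub>m n :: 'a mat)"
  then have ij: "i < n" "j < n" and fj: "f j < n" using assms(1) by (auto simp: image_subset_iff)
  have "(perm_mat n f * transpose_mat (perm_mat n f)) $$ (i, j) = (perm_mat n f :: 'a mat) $$ (i, f j)"
    using ij fj by (intro index_mult_transpose_perm_mat) auto
  also have "\<dots> = 1\<^sub>m n $$ (i, j)"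
    using ij fj assms(2) by (auto simp: perm_mat_def inj_on_eq_iff)
  finally show "(perm_mat n f * transpose_mat (perm_mat n f)) $$ (i, j) = (1\<^sub>m n :: 'a mat) $$ (i, j)" .
qed (simp_all add: perm_mat_def)

lemma in_S_relabel:
  assumes surj: "f ` {0..<n} = {0..<n}" and A: "in_S n E A"
  shows "\<exists>A'. in_S n (blowup_graph n f E) A' \<and> spec A' = spec A"
proof (intro exI conjI)
  let ?P = "perm_mat n f :: real mat"
  have inj: "inj_on f {0..<n}" using surj by (simp add: eq_card_imp_inj_on)
  have f_less: "f i < n" if "i < n" for i using surj that by auto
  have Ac: "A \<in> carrier_mat n n" and sym: "transpose_mat A = A"
    using A by (auto simp: in_S_def)
  have entry: "(?P * A * transpose_mat ?P) $$ (i, j) = A $$ (f i, f j)" if "i < n" "j < n" for i j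
  proof -
    have "(?P * A * transpose_mat ?P) $$ (i, j) = (?P * A) $$ (i, f j)"
      using that f_less mult_carrier_mat[OF perm_mat_carrier Ac]
      by (intro index_mult_transpose_perm_mat) auto
    also have "\<dots> = A $$ (f i, f j)"
      using that f_less Ac by (intro index_perm_mat_mult) auto
    finally show ?thesis .
  qed
  have "?P * A * transpose_mat ?P \<in> carrier_mat n n"
    using Ac by (meson mult_carrier_mat perm_mat_carrier transpose_carrier_mat)
  then show "in_S n (blowup_graph n f E) (?P * A * transpose_mat ?P)"
    unfolding in_S_def
    using transpose_symmetric_conj[OF perm_mat_carrier Ac sym] A f_less inj
    by (auto simp: entry in_S_def blowup_graph_def inj_on_eq_iff)
  show "spec (?P * A * transpose_mat ?P) = spec A"
    using spec_orthogonal_conj[OF perm_mat_carrier Ac perm_mat_orthogonal] surj inj by simp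
qed

definition plane_reflection :: "nat \<Rightarrow> nat \<Rightarrow> real \<Rightarrow> real \<Rightarrow> real mat" where
  "plane_reflection n v c s = mat (Suc n) (Suc n) (\<lambda>(i, j).
     if i = v \<and> j = v then c else if i = n \<and> j = n then - c
     else if i = v \<and> j = n \<or> i = n \<and> j = v then s else if i = j then 1 else 0)"

lemma plane_reflection_carrier [simp]: "plane_reflection n v c s \<in> carrier_mat (Suc n) (Suc n)"
  by (simp add: plane_reflection_def)

lemma transpose_plane_reflection [simp]:
  "transpose_mat (plane_reflection n v c s) = plane_reflection n v c s"
  by (rule eq_matI) (auto simp: plane_reflection_def)

lemma index_plane_reflection_mult:
  assumes X: "X \<in> carrier_mat (Suc n) nc" and "v < n" "i \<le> n" "j < nc"
  shows "(plane_reflection n v c s * X) $$ (i, j) =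
    (if i = v then c * X $$ (v, j) + s * X $$ (n, j)
     else if i = n then s * X $$ (v, j) - c * X $$ (n, j) else X $$ (i, j))"
proof -
  let ?g = "\<lambda>k. plane_reflection n v c s $$ (i, k) * X $$ (k, j)"
  have "(plane_reflection n v c s * X) $$ (i, j) = sum ?g {0..<Suc n}"
    using assms carrier_matD[OF plane_reflection_carrier[of n v c s]]
    by (simp add: scalar_prod_def del: sum.op_ivl_Suc)
  also have "\<dots> = sum ?g {v, n, i}"
    using assms by (intro sum.mono_neutral_right) (auto simp: plane_reflection_def)
  also have "\<dots> = (if i = v then c * X $$ (v, j) + s * X $$ (n, j)
     else if i = n then s * X $$ (v, j) - c * X $$ (n, j) else X $$ (i, j))"
  proof (cases "i = v \<or> i = n")
    case True
    then have "{v, n, i} = {v, n}" by auto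
    then show ?thesis using True assms by (auto simp: plane_reflection_def)
  next
    case False
    then show ?thesis using assms by (simp add: plane_reflection_def)
  qed
  finally show ?thesis .
qed

lemma index_mult_plane_reflection:
  assumes X: "X \<in> carrier_mat nr (Suc n)" and "v < n" "i < nr" "j \<le> n"
  shows "(X * plane_reflection n v c s) $$ (i, j) =
    (if j = v then c * X $$ (i, v) + s * X $$ (i, n)
     else if j = n then s * X $$ (i, v) - c * X $$ (i, n) else X $$ (i, j))"
proof -
  have "X * plane_reflection n v c s = transpose_mat (plane_reflection n v c s * transpose_mat X)"
    using X by (simp add: transpose_mult[of _ "Suc n" "Suc n" _ nr])
  then have "(X * plane_reflection n v c s) $$ (i, j) =
      (plane_reflection n v c s * transpose_mat X) $$ (j, i)"
    using assms carrier_matD[OF plane_reflection_carrier[of n v c s]] by simp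
  then show ?thesis
    using assms by (simp add: index_plane_reflection_mult[of "transpose_mat X" _ nr])
qed

lemma plane_reflection_orthogonal:
  assumes "v < n" and "c * c + s * s = 1"
  shows "plane_reflection n v c s * transpose_mat (plane_reflection n v c s) = 1\<^sub>m (Suc n)"
proof (rule eq_matI)
  fix i j assume "i < dim_row (1\<^sub>m (Suc n) :: real mat)" "j < dim_col (1\<^sub>m (Suc n) :: real mat)"
  then have ij: "i \<le> n" "j \<le> n" by auto
  let ?R = "plane_reflection n v c s"
  have "(?R * transpose_mat ?R) $$ (i, j) = (if i = v then c * ?R $$ (v, j) + s * ?R $$ (n, j)
      else if i = n then s * ?R $$ (v, j) - c * ?R $$ (n, j) else ?R $$ (i, j))"
    using assms(1) ij
    by (subst transpose_plane_reflection, intro index_plane_reflection_mult[where nc = "Suc n"]) auto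
  also have "\<dots> = 1\<^sub>m (Suc n) $$ (i, j)"
  proof -
    consider "j = v" | "j = n" | "j \<noteq> v" "j \<noteq> n" by blast
    then show ?thesis
      by cases (use assms ij in \<open>auto simp: plane_reflection_def mult.commute\<close>)
  qed
  finally show "(?R * transpose_mat ?R) $$ (i, j) = 1\<^sub>m (Suc n) $$ (i, j)" .
qed (simp_all add: plane_reflection_def)

definition diag_extend :: "nat \<Rightarrow> 'a :: zero mat \<Rightarrow> 'a \<Rightarrow> 'a mat" where
  "diag_extend n A l = mat (Suc n) (Suc n) (\<lambda>(i, j).
     if i < n \<and> j < n then A $$ (i, j) else if i = n \<and> j = n then l else 0)"

lemma index_diag_extend:
  assumes "i \<le> n" and "j \<le> n"
  shows "diag_extend n A l $$ (i, j) =
    (if i < n \<and> j < n then A $$ (i, j) else if i = n \<and> j = n then l else 0)"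
  using assms by (simp add: diag_extend_def)

lemma diag_extend_carrier [simp]: "diag_extend n A l \<in> carrier_mat (Suc n) (Suc n)"
  by (simp add: diag_extend_def)

lemma transpose_diag_extend:
  assumes "A \<in> carrier_mat n n" and "transpose_mat A = A"
  shows "transpose_mat (diag_extend n A l) = diag_extend n A l"
  using assms by (intro eq_matI) (auto simp: diag_extend_def symmetric_mat_index_swap)

lemma char_poly_four_block_mat_lower_left_zero:
  fixes A D :: "'a :: idom mat"
  assumes A: "A \<in> carrier_mat n n" and B: "B \<in> carrier_mat n m" and D: "D \<in> carrier_mat m m"
  shows "char_poly (four_block_mat A B (0\<^sub>m m n) D) = char_poly A * char_poly D"
proof -
  let ?cm = "\<lambda>A. [:0, 1:] \<cdot>\<^sub>m 1\<^sub>m (dim_row A) + map_mat (\<lambda>a. [:- a:]) A"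
  have "?cm (four_block_mat A B (0\<^sub>m m n) D) =
      four_block_mat (?cm A) (map_mat (\<lambda>a. [:- a:]) B) (0\<^sub>m m n) (?cm D)"
    using A B D by (intro eq_matI) (auto simp: one_poly_def)
  moreover have "det \<dots> = det (?cm A) * det (?cm D)"
    using A B D by (intro det_four_block_mat_lower_left_zero) auto
  ultimately show ?thesis unfolding char_poly_defs by simp
qed

lemma char_poly_mat_1_1: "char_poly (mat 1 1 (\<lambda>_. x)) = [:- x, 1:]"
proof -
  have "char_poly (mat 1 1 (\<lambda>_. x)) = (\<Prod>a \<leftarrow> diag_mat (mat 1 1 (\<lambda>_. x)). [:- a, 1:])"
    by (rule char_poly_upper_triangular[of _ 1]) (auto simp: upper_triangular_def)
  then show ?thesis by (simp add: diag_mat_def)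
qed

lemma spec_diag_extend:
  assumes A: "A \<in> carrier_mat n n"
  shows "spec (diag_extend n A l) = spec A + {#l#}"
proof -
  have "diag_extend n A l = four_block_mat A (0\<^sub>m n 1) (0\<^sub>m 1 n) (mat 1 1 (\<lambda>_. l))"
    using A by (intro eq_matI) (auto simp: diag_extend_def)
  then have "char_poly (diag_extend n A l) = char_poly A * char_poly (mat 1 1 (\<lambda>_. l))"
    by (simp only: char_poly_four_block_mat_lower_left_zero[OF A] zero_carrier_mat mat_carrier)
  also have "\<dots> = char_poly A * [:- l, 1:]"
    by (simp only: char_poly_mat_1_1)
  finally have "spec (diag_extend n A l) = proots (char_poly A * [:- l, 1:])"
    by (simp add: spec_def)
  also have "\<dots> = proots (char_poly A) + proots [:- l, 1:]"
    using degree_monic_char_poly[OF A] by (intro proots_mult) auto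
  finally show ?thesis by (simp add: spec_def)
qed

definition vertex_dup_mat :: "nat \<Rightarrow> nat \<Rightarrow> real \<Rightarrow> real \<Rightarrow> real mat \<Rightarrow> real \<Rightarrow> real mat" where
  "vertex_dup_mat n v c s A l =
     plane_reflection n v c s * diag_extend n A l * plane_reflection n v c s"

lemma vertex_dup_mat_carrier [simp]: "vertex_dup_mat n v c s A l \<in> carrier_mat (Suc n) (Suc n)"
  unfolding vertex_dup_mat_def by (meson diag_extend_carrier mult_carrier_mat plane_reflection_carrier)

lemma index_vertex_dup_mat:
  assumes v: "v < n" and ij: "i \<le> n" "j \<le> n"
  shows "vertex_dup_mat n v c s A l $$ (i, j) =
    (if i = v \<and> j = v then c * c * A $$ (v, v) + s * s * l
     else if i = n \<and> j = n then s * s * A $$ (v, v) + c * c * l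
     else if i = v \<and> j = n \<or> i = n \<and> j = v then c * s * (A $$ (v, v) - l)
     else if i = v then c * A $$ (v, j) else if i = n then s * A $$ (v, j)
     else if j = v then c * A $$ (i, v) else if j = n then s * A $$ (i, v) else A $$ (i, j))"
proof -
  let ?R = "plane_reflection n v c s" and ?B = "diag_extend n A l"
  have RB: "?R * ?B \<in> carrier_mat (Suc n) (Suc n)"
    by (meson diag_extend_carrier mult_carrier_mat plane_reflection_carrier)
  have RB_entry: "(?R * ?B) $$ (x, y) =
      (if x = v then (if y = n then s * l else c * A $$ (v, y))
       else if x = n then (if y = n then - c * l else s * A $$ (v, y))
       else if y = n then 0 else A $$ (x, y))" if "x \<le> n" "y \<le> n" for x y
    using that v
    by (auto simp: index_plane_reflection_mult[OF diag_extend_carrier] index_diag_extend)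
  have "vertex_dup_mat n v c s A l $$ (i, j) =
    (if j = v then c * (?R * ?B) $$ (i, v) + s * (?R * ?B) $$ (i, n)
     else if j = n then s * (?R * ?B) $$ (i, v) - c * (?R * ?B) $$ (i, n) else (?R * ?B) $$ (i, j))"
    unfolding vertex_dup_mat_def using RB v ij by (intro index_mult_plane_reflection) auto
  then show ?thesis
    using v ij by (simp add: RB_entry algebra_simps)
qed

lemma in_S_vertex_dup_mat:
  assumes A: "in_S n E A" and v: "v < n" and "c \<noteq> 0" and "s \<noteq> 0" and "l \<noteq> A $$ (v, v)"
  shows "in_S (Suc n) (blowup_graph (Suc n) (dup_map n v) E) (vertex_dup_mat n v c s A l)"
proof -
  have Ac: "A \<in> carrier_mat n n" and sym: "transpose_mat A = A"
    and pattern: "\<And>i j. i < n \<Longrightarrow> j < n \<Longrightarrow> i \<noteq> j \<Longrightarrow> A $$ (i, j) \<noteq> 0 \<longleftrightarrow> E i j"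
    using A by (auto simp: in_S_def)
  have "transpose_mat (vertex_dup_mat n v c s A l) = vertex_dup_mat n v c s A l"
    using transpose_symmetric_conj[OF plane_reflection_carrier diag_extend_carrier
        transpose_diag_extend[OF Ac sym]]
    by (simp add: vertex_dup_mat_def)
  moreover have
    "vertex_dup_mat n v c s A l $$ (i, j) \<noteq> 0 \<longleftrightarrow> blowup_graph (Suc n) (dup_map n v) E i j"
    if "i < Suc n" "j < Suc n" "i \<noteq> j" for i j
    using that v assms(3-5) pattern[of v j] pattern[of i v] pattern[of i j]
    by (auto simp: index_vertex_dup_mat blowup_graph_def dup_map_def less_Suc_eq split: if_splits)
  ultimately show ?thesis by (simp add: in_S_def)
qed

lemma spec_vertex_dup_mat:
  assumes "A \<in> carrier_mat n n" and "v < n" and "c * c + s * s = 1"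
  shows "spec (vertex_dup_mat n v c s A l) = spec A + {#l#}"
  using spec_orthogonal_conj[OF plane_reflection_carrier diag_extend_carrier
      plane_reflection_orthogonal[OF assms(2-3)]] spec_diag_extend[OF assms(1)]
  by (simp add: vertex_dup_mat_def)

lemma convex_combinations_avoid_finite:
  fixes a l :: real
  assumes "finite S" and "a \<noteq> l"
  obtains t where "0 < t" "t < 1" "t * a + (1 - t) * l \<notin> S" "(1 - t) * a + t * l \<notin> S"
proof -
  let ?p = "\<lambda>t. l + t * (a - l)" and ?q = "\<lambda>t. a + t * (l - a)"
  have "inj ?p" "inj ?q"
    using assms(2) by (auto intro!: injI)
  then have "finite (?p -` S \<union> ?q -` S)"
    using assms(1) by (simp add: finite_vimageI)
  moreover have "infinite {0<..<(1::real)}" by simp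
  ultimately obtain t where "t \<in> {0<..<1}" "t \<notin> ?p -` S \<union> ?q -` S"
    by (meson finite_subset subsetI)
  moreover have "t * a + (1 - t) * l = ?p t" "(1 - t) * a + t * l = ?q t"
    by (simp_all add: algebra_simps)
  ultimately show ?thesis using that by auto
qed

lemma in_S_duplicate_vertex:
  assumes A: "in_S n E A" and v: "v < n" and l: "l \<noteq> A $$ (v, v)" and S: "finite S"
  obtains A1 where "in_S (Suc n) (blowup_graph (Suc n) (dup_map n v) E) A1"
    and "spec A1 = spec A + {#l#}"
    and "A1 $$ (v, v) \<notin> S" and "A1 $$ (n, n) \<notin> S"
    and "\<forall>i<n. i \<noteq> v \<longrightarrow> A1 $$ (i, i) = A $$ (i, i)"
proof -
  obtain t where t: "0 < t" "t < 1"
    and avoid: "t * A $$ (v, v) + (1 - t) * l \<notin> S" "(1 - t) * A $$ (v, v) + t * l \<notin> S"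
    using convex_combinations_avoid_finite[OF S l[symmetric]] by blast
  define c s where "c = sqrt t" and "s = sqrt (1 - t)"
  have cs: "c * c = t" "s * s = 1 - t" "c \<noteq> 0" "s \<noteq> 0"
    using t by (auto simp: c_def s_def)
  let ?A1 = "vertex_dup_mat n v c s A l"
  show ?thesis
  proof
    show "in_S (Suc n) (blowup_graph (Suc n) (dup_map n v) E) ?A1"
      using in_S_vertex_dup_mat[OF A v cs(3,4) l] .
    show "spec ?A1 = spec A + {#l#}"
      using A v cs by (intro spec_vertex_dup_mat) (auto simp: in_S_def)
    have "?A1 $$ (v, v) = t * A $$ (v, v) + (1 - t) * l"
      and "?A1 $$ (n, n) = (1 - t) * A $$ (v, v) + t * l"
      using v cs by (simp_all add: index_vertex_dup_mat)
    then show "?A1 $$ (v, v) \<notin> S" "?A1 $$ (n, n) \<notin> S"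
      using avoid by simp_all
    show "\<forall>i<n. i \<noteq> v \<longrightarrow> ?A1 $$ (i, i) = A $$ (i, i)"
      using v by (simp add: index_vertex_dup_mat)
  qed
qed

lemma blowup_realises_spectrum:
  assumes "is_blowup n E m F" and "size \<sigma>' = m - n" and "in_S n E A"
    and "\<forall>i<n. A $$ (i, i) \<notin># \<sigma>'"
  shows "\<exists>A'. in_S m F A' \<and> spec A' = spec A + \<sigma>'"
  using assms
proof (induction \<sigma>' arbitrary: n E A)
  case empty
  have "m = n" using empty.prems(1,2) is_blowup_le by fastforce
  then obtain f where "f ` {0..<n} = {0..<n}" "F = blowup_graph n f E"
    using empty.prems(1) by (auto simp: is_blowup_iff_blowup_graph)
  then show ?case using in_S_relabel empty.prems(3) \<open>m = n\<close> by auto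
next
  case (add l \<sigma>)
  have "n < m" using add.prems(2) by simp
  then obtain v where v: "v < n"
    and blowup: "is_blowup (Suc n) (blowup_graph (Suc n) (dup_map n v) E) m F"
    using is_blowup_dup[OF add.prems(1)] by blast
  have "l \<noteq> A $$ (v, v)" using add.prems(4) v by auto
  then obtain A1 where A1: "in_S (Suc n) (blowup_graph (Suc n) (dup_map n v) E) A1"
    and spec_A1: "spec A1 = spec A + {#l#}"
    and diag: "A1 $$ (v, v) \<notin># \<sigma>" "A1 $$ (n, n) \<notin># \<sigma>"
      "\<forall>i<n. i \<noteq> v \<longrightarrow> A1 $$ (i, i) = A $$ (i, i)"
    using in_S_duplicate_vertex[OF add.prems(3) v, of l "set_mset \<sigma>"] by auto
  have "\<forall>i<Suc n. A1 $$ (i, i) \<notin># \<sigma>"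
    using diag add.prems(4) by (auto simp: less_Suc_eq)
  moreover have "size \<sigma> = m - Suc n" using add.prems(2) by simp
  ultimately obtain A' where "in_S m F A'" "spec A' = spec A1 + \<sigma>"
    using add.IH[OF blowup _ A1] by blast
  then show ?case using spec_A1 by auto
qed

theorem lemma2p4:
  fixes n m :: nat and E F :: "nat \<Rightarrow> nat \<Rightarrow> bool"
    and A :: "real mat" and \<sigma>' :: "real multiset"
  assumes "simple_graph n E"
    and "is_blowup n E m F"
    and "size \<sigma>' = m - n"
    and "in_S n E A"
    and "\<forall>i<n. A $$ (i, i) \<notin># \<sigma>'"
  shows "\<exists>A'. in_S m F A' \<and> spec A' = spec A + \<sigma>'"
  using blowup_realises_spectrum[OF assms(2-5)] .

end
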